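(* Consider a Markov coding game and the MEME sender policy $\pi_{\mid M}$ constructed from an MDP policy $\pi$ (as described in the context). Then, in expectation over messages $M\sim\mu$, the expected cumulative MDP reward of the message-conditional policy equals that of $\pi$: \[\mathbb{E}\left[\mathcal{R}(Z)\mid \pi_{\mid M}\right]=\mathbb{E}\left[\mathcal{R}(Z)\mid \pi\right],\] where $Z$ is the terminal trajectory and $\mathcal{R}(Z)=\sum_j \mathcal{R}(s^j,a^j)$ is the reward accumulated along it.
   Context: A (finite, episodic) Markov decision process is $\langle \mathcal{S},\mathcal{A},\mathcal{R},\mathcal{T}\rangle$ with finite state set $\mathcal{S}$, finite action set $\mathcal{A}$, reward $\mathcal{R}:\mathcal{S}\times\mathcal{A}\to\mathbb{R}$ and transition function $\mathcal{T}:\mathcal{S}\times\mathcal{A}\to\Delta(\mathcal{S})$; episodes terminate after finitely many steps. A Markov coding game (MCG) is $\langle(\mathcal{S},\mathcal{A},\mathcal{T},\mathcal{R}),\mathcal{M},\mu,\zeta\rangle$ where $\mathcal{M}$ is a finite message set, $\mu\in\Delta(\mathcal{M})$ is the prior, and $\zeta\ge 0$. A message $M\sim\mu$ is revealed to the sender, who plays the MDP with a message-conditional policy $\pi_{\mid M}$ (mapping states and messages to $\Delta(\mathcal{A})$, possibly depending on time/history), producing a terminal trajectory $Z$; the receiver observes $Z$ and guesses $\hat M$. A minimum entropy coupling $\mathrm{MEC}(p,q)$ of distributions $p\in\Delta(\mathcal{M})$ and $q\in\Delta(\mathcal{A})$ is a joint distribution $\nu$ on $\mathcal{M}\times\mathcal{A}$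 whose marginals are $p$ and $q$ and whose joint entropy is minimal among all such joint distributions. MEME sender: given an MDP policy $\pi:\mathcal{S}\to\Delta(\mathcal{A})$ (obtained by maximum entropy RL), set $b^0=\mu$; at time $t$ in state $s^t$ with current posterior $b^t=\mathcal{P}(M\mid h^t,\pi_{\mid M}^{:t})$ (the posterior over the message given the history $h^t=(s^0,a^0,\dots,s^t)$ and the sender's policy used so far), compute $\nu=\mathrm{MEC}(b^t,\pi(s^t))$ and act according to $\pi_{\mid M}(s^t,m)=\nu(A\mid M=m)$; after observing the chosen action, $b^{t+1}$ is obtained by Bayesian updating of $b^t$ with likelihood $\pi_{\mid M}(s^t,\cdot)(a^t)$. $\mathbb{E}[\cdot\mid\pi]$ denotes expectation over trajectories generated by following $\pi$ in the MDP. *)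

theory Defs
  imports "HOL-Probability.Probability"
begin

text \<open>Shannon entropy of a finitely supported joint distribution (convention 0 log 0 = 0).\<close>
definition pmf_entropy :: "'x pmf \<Rightarrow> real" where
  "pmf_entropy p = - (\<Sum>x\<in>set_pmf p. pmf p x * log 2 (pmf p x))"

definition is_coupling :: "('m \<times> 'a) pmf \<Rightarrow> 'm pmf \<Rightarrow> 'a pmf \<Rightarrow> bool" where
  "is_coupling \<nu> p q \<longleftrightarrow> map_pmf fst \<nu> = p \<and> map_pmf snd \<nu> = q"

definition is_MEC :: "('m \<times> 'a) pmf \<Rightarrow> 'm pmf \<Rightarrow> 'a pmf \<Rightarrow> bool" where
  "is_MEC \<nu> p q \<longleftrightarrow> is_coupling \<nu> p q \<and>
     (\<forall>\<nu>'. is_coupling \<nu>' p q \<longrightarrow> pmf_entropy \<nu> \<le> pmf_entropy \<nu>')"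

text \<open>Conditional distribution nu(A | M = m); for messages of zero belief (which never
  occur) an arbitrary fallback q is used.\<close>
definition cond_action :: "('m \<times> 'a) pmf \<Rightarrow> 'm pmf \<Rightarrow> 'a pmf \<Rightarrow> 'm \<Rightarrow> 'a pmf" where
  "cond_action \<nu> b q m =
     (if pmf b m > 0 then map_pmf snd (cond_pmf \<nu> {x. fst x = m}) else q)"

definition bayes_update :: "'m pmf \<Rightarrow> ('m \<Rightarrow> 'a pmf) \<Rightarrow> 'a \<Rightarrow> 'm pmf" where
  "bayes_update b lik a =
     map_pmf fst (cond_pmf (bind_pmf b (\<lambda>m. map_pmf (\<lambda>a'. (m, a')) (lik m))) {x. snd x = a})"

fun traj_pol :: "('s \<Rightarrow> 'a pmf) \<Rightarrow> ('s \<Rightarrow> 'a \<Rightarrow> 's pmf) \<Rightarrow> nat \<Rightarrow> 's \<Rightarrow> ('s \<times> 'a) list pmf" where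
  "traj_pol \<pi> Tr 0 s = return_pmf []"
| "traj_pol \<pi> Tr (Suc n) s =
     bind_pmf (\<pi> s) (\<lambda>a. bind_pmf (Tr s a) (\<lambda>s'.
       map_pmf (\<lambda>z. (s, a) # z) (traj_pol \<pi> Tr n s')))"

text \<open>The sender holds the true message m.\<close>
fun traj_meme :: "('m pmf \<Rightarrow> 'a pmf \<Rightarrow> ('m \<times> 'a) pmf) \<Rightarrow> ('s \<Rightarrow> 'a pmf) \<Rightarrow>
    ('s \<Rightarrow> 'a \<Rightarrow> 's pmf) \<Rightarrow> nat \<Rightarrow> 'm pmf \<Rightarrow> 's \<Rightarrow> 'm \<Rightarrow> ('s \<times> 'a) list pmf" where
  "traj_meme mec \<pi> Tr 0 b s m = return_pmf []"
| "traj_meme mec \<pi> Tr (Suc n) b s m =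
     (let pol = cond_action (mec b (\<pi> s)) b (\<pi> s) in
      bind_pmf (pol m) (\<lambda>a. bind_pmf (Tr s a) (\<lambda>s'.
        map_pmf (\<lambda>z. (s, a) # z) (traj_meme mec \<pi> Tr n (bayes_update b pol a) s' m))))"

definition traj_reward :: "('s \<Rightarrow> 'a \<Rightarrow> real) \<Rightarrow> ('s \<times> 'a) list \<Rightarrow> real" where
  "traj_reward R z = sum_list (map (\<lambda>(s, a). R s a) z)"

end

theory Submission
  imports Defs
begin

text \<open>Let \<open>\<nu>\<close> be the coupling of the current posterior \<open>b\<close> and \<open>\<pi>(s)\<close> used by the sender.
  Drawing the message from \<open>b\<close> and then the action from \<open>\<nu>(A | M)\<close> produces the pair
  \<open>(M, A) \<sim> \<nu>\<close>; disintegrating \<open>\<nu>\<close> along its other marginal, this is the same as drawing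
  \<open>A \<sim> \<pi>(s)\<close> and then \<open>M\<close> from the Bayesian posterior \<open>\<nu>(M | A)\<close>, which is exactly the
  belief the sender carries into the next step. By induction on the horizon, averaging the
  MEME trajectory over the current posterior yields the trajectory of \<open>\<pi>\<close>; only the
  coupling property of the MEC is needed, not the minimality of its entropy.\<close>

lemma bind_cond_pmf_map_cancel:
  "bind_pmf (map_pmf f J) (\<lambda>y. cond_pmf J {x. f x = y}) = J"
  by (rule bind_cond_pmf_cancel)
     (auto simp: measure_map_pmf vimage_def intro!: arg_cong2[where f = measure])

lemma bind_pmf_disintegrate_snd:
  "bind_pmf J (\<lambda>x. f (snd x) (fst x)) =
   bind_pmf (map_pmf snd J) (\<lambda>a. bind_pmf (map_pmf fst (cond_pmf J {x. snd x = a})) (f a))"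
proof -
  have "bind_pmf J (\<lambda>x. f (snd x) (fst x)) =
      bind_pmf (map_pmf snd J) (\<lambda>a. bind_pmf (cond_pmf J {x. snd x = a}) (\<lambda>x. f (snd x) (fst x)))"
    by (subst (1) bind_cond_pmf_map_cancel[of snd J, symmetric]) (simp add: bind_assoc_pmf)
  also have "\<dots> = bind_pmf (map_pmf snd J) (\<lambda>a. bind_pmf (cond_pmf J {x. snd x = a}) (\<lambda>x. f a (fst x)))"
  proof (intro bind_pmf_cong refl)
    fix a x
    assume "a \<in> set_pmf (map_pmf snd J)" and "x \<in> set_pmf (cond_pmf J {x. snd x = a})"
    then show "f (snd x) (fst x) = f a (fst x)"
      by (subst (asm) set_cond_pmf) auto
  qed
  finally show ?thesis
    by (simp add: bind_map_pmf)
qed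

lemma bind_cond_action_eq:
  assumes "map_pmf fst \<nu> = b"
  shows "bind_pmf b (\<lambda>m. map_pmf (Pair m) (cond_action \<nu> b q m)) = \<nu>"
proof -
  have "map_pmf (Pair m) (cond_action \<nu> b q m) = cond_pmf \<nu> {x. fst x = m}"
    if "m \<in> set_pmf b" for m
  proof -
    from that assms have "set_pmf \<nu> \<inter> {x. fst x = m} \<noteq> {}"
      by auto
    then have "map_pmf (\<lambda>x. (m, snd x)) (cond_pmf \<nu> {x. fst x = m}) = cond_pmf \<nu> {x. fst x = m}"
      by (intro map_pmf_idI) auto
    with that show ?thesis
      by (simp add: cond_action_def pmf_positive map_pmf_comp)
  qed
  then have "bind_pmf b (\<lambda>m. map_pmf (Pair m) (cond_action \<nu> b q m)) =
      bind_pmf b (\<lambda>m. cond_pmf \<nu> {x. fst x = m})"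
    by (intro bind_pmf_cong) auto
  with assms bind_cond_pmf_map_cancel[of fst \<nu>] show ?thesis
    by simp
qed

lemma bind_cond_action_swap:
  assumes "is_coupling \<nu> b q"
  shows "bind_pmf b (\<lambda>m. bind_pmf (cond_action \<nu> b q m) (\<lambda>a. f a m)) =
    bind_pmf q (\<lambda>a. bind_pmf (map_pmf fst (cond_pmf \<nu> {x. snd x = a})) (f a))"
proof -
  from assms have fst: "map_pmf fst \<nu> = b" and snd: "map_pmf snd \<nu> = q"
    by (simp_all add: is_coupling_def)
  have "bind_pmf b (\<lambda>m. bind_pmf (cond_action \<nu> b q m) (\<lambda>a. f a m)) =
      bind_pmf (bind_pmf b (\<lambda>m. map_pmf (Pair m) (cond_action \<nu> b q m))) (\<lambda>x. f (snd x) (fst x))"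
    by (simp add: bind_assoc_pmf bind_map_pmf)
  also have "\<dots> = bind_pmf \<nu> (\<lambda>x. f (snd x) (fst x))"
    by (simp add: bind_cond_action_eq[OF fst])
  finally show ?thesis
    by (simp add: bind_pmf_disintegrate_snd snd)
qed

lemma bayes_update_cond_action:
  assumes "map_pmf fst \<nu> = b"
  shows "bayes_update b (cond_action \<nu> b q) a = map_pmf fst (cond_pmf \<nu> {x. snd x = a})"
  by (simp add: bayes_update_def bind_cond_action_eq[OF assms])

lemma bind_traj_meme_posterior:
  assumes coupling: "\<And>p q. is_coupling (mec p q) p q"
  shows "bind_pmf b (traj_meme mec \<pi> Tr n b s) = traj_pol \<pi> Tr n s"
proof (induction n arbitrary: b s)
  case 0
  then show ?case by simp
next
  case (Suc n)
  define \<nu> where "\<nu> = mec b (\<pi> s)"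
  define post where "post a = map_pmf fst (cond_pmf \<nu> {x. snd x = a})" for a
  have \<nu>: "is_coupling \<nu> b (\<pi> s)"
    by (simp add: \<nu>_def coupling)
  have posterior: "bayes_update b (cond_action \<nu> b (\<pi> s)) a = post a" for a
    using \<nu> by (simp add: post_def bayes_update_cond_action is_coupling_def)
  define step where "step = (\<lambda>a m. bind_pmf (Tr s a) (\<lambda>s'.
      map_pmf ((#) (s, a)) (traj_meme mec \<pi> Tr n (post a) s' m)))"
  have "bind_pmf b (traj_meme mec \<pi> Tr (Suc n) b s) =
      bind_pmf b (\<lambda>m. bind_pmf (cond_action \<nu> b (\<pi> s) m) (\<lambda>a. step a m))"
    unfolding traj_meme.simps Let_def \<nu>_def[symmetric] posterior step_def ..
  also have "\<dots> = bind_pmf (\<pi> s) (\<lambda>a. bind_pmf (post a) (step a))"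
    unfolding post_def by (rule bind_cond_action_swap[OF \<nu>])
  also have "\<dots> = bind_pmf (\<pi> s) (\<lambda>a. bind_pmf (Tr s a) (\<lambda>s'.
      map_pmf ((#) (s, a)) (bind_pmf (post a) (traj_meme mec \<pi> Tr n (post a) s'))))"
    unfolding step_def map_pmf_def
    by (subst bind_commute_pmf) (simp add: bind_assoc_pmf)
  also have "\<dots> = traj_pol \<pi> Tr (Suc n) s"
    by (simp add: Suc.IH)
  finally show ?case .
qed

theorem proposition2:
  fixes R :: "'s::finite \<Rightarrow> 'a::finite \<Rightarrow> real"
    and Tr :: "'s \<Rightarrow> 'a \<Rightarrow> 's pmf"
    and \<mu> :: "'m::finite pmf"
    and \<pi> :: "'s \<Rightarrow> 'a pmf"
    and init :: "'s pmf"
    and horizon :: nat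
    and mec :: "'m pmf \<Rightarrow> 'a pmf \<Rightarrow> ('m \<times> 'a) pmf"
  assumes mec: "\<And>p q. is_MEC (mec p q) p q"
  shows "measure_pmf.expectation
           (bind_pmf \<mu> (\<lambda>m. bind_pmf init (\<lambda>s0. traj_meme mec \<pi> Tr horizon \<mu> s0 m)))
           (traj_reward R)
       = measure_pmf.expectation
           (bind_pmf init (\<lambda>s0. traj_pol \<pi> Tr horizon s0))
           (traj_reward R)"
proof -
  have coupling: "is_coupling (mec p q) p q" for p q
    using mec by (simp add: is_MEC_def)
  have "bind_pmf \<mu> (\<lambda>m. bind_pmf init (\<lambda>s0. traj_meme mec \<pi> Tr horizon \<mu> s0 m)) =
      bind_pmf init (\<lambda>s0. bind_pmf \<mu> (traj_meme mec \<pi> Tr horizon \<mu> s0))"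
    by (rule bind_commute_pmf)
  also have "\<dots> = bind_pmf init (traj_pol \<pi> Tr horizon)"
    by (simp add: bind_traj_meme_posterior[OF coupling])
  finally show ?thesis
    by simp
qed

end
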